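(* For all $n \ge 5$, \[ w(n,1) = w(n-2,1) + w(n-3,0) - 1, \] where $w(m,k)$ is the number of compositions of $m$ with all parts in $\{1,2\}$ having exactly $k$ water cells.
   Context: A composition of $n \ge 0$ is a finite sequence $(c_1,\dots,c_t)$ of positive integers with $c_1+\cdots+c_t=n$; the empty composition is the unique composition of $0$. Let $C_{12}(n)$ be the set of compositions of $n$ all of whose parts lie in $\{1,2\}$. The number of water cells of a composition $(c_1,\dots,c_t)$ is $\sum_{i=1}^{t} \max\bigl(0, \min(\max_{j \le i} c_j, \max_{j \ge i} c_j) - c_i\bigr)$ (the number of unit squares that would hold water poured over its bargraph, in which column $i$ has height $c_i$). For $n,k \ge 0$, $W(n,k)$ is the set of compositions in $C_{12}(n)$ with exactly $k$ water cells and $w(n,k)=|W(n,k)|$. *)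

theory Defs
  imports Main
begin

definition C12 :: "nat \<Rightarrow> nat list set" where
  "C12 n = {cs. set cs \<subseteq> {1, 2} \<and> sum_list cs = n}"

text \<open>Water cells: sum over i of max(0, min(max_{j<=i} c_j, max_{j>=i} c_j) - c_i),
  with 0-based indices. Nat subtraction truncates, which realises the max with 0.\<close>
definition water :: "nat list \<Rightarrow> nat" where
  "water cs = (\<Sum>i<length cs.
      min (Max {cs ! j | j. j \<le> i}) (Max {cs ! j | j. i \<le> j \<and> j < length cs}) - cs ! i)"

definition W :: "nat \<Rightarrow> nat \<Rightarrow> nat list set" where
  "W n k = {cs \<in> C12 n. water cs = k}"

definition w :: "nat \<Rightarrow> nat \<Rightarrow> nat" where
  "w n k = card (W n k)"

end

theory Submission imports Defs begin

text \<open>For a composition with parts in {1,2} a column holds water exactly when it is a 1 with a 2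
  somewhere on each side, and then it holds one cell. So water 0 means the shape
  \<open>1\<^sup>a 2\<^sup>b\<^sup>+\<^sup>1 1\<^sup>c\<close> (or all ones), and water 1 means the shape
  \<open>1\<^sup>a 2\<^sup>b\<^sup>+\<^sup>1 1 2\<^sup>d\<^sup>+\<^sup>1 1\<^sup>c\<close>. Counting the latter by its exponents, those with
  \<open>b > 0\<close> correspond to water-1 compositions of \<open>n - 2\<close> (drop one 2), and those with \<open>b = 0\<close>
  to the non-constant water-0 compositions of \<open>n - 3\<close> (delete the leading \<open>2 1\<close> of the middle);
  the all-ones composition accounts for the \<open>- 1\<close>.\<close>

fun enclosed_ones :: "bool \<Rightarrow> nat list \<Rightarrow> nat" where
  "enclosed_ones s [] = 0"
| "enclosed_ones s (x # xs) =
     (if x = 1 \<and> s \<and> 2 \<in> set xs then 1 else 0) + enclosed_ones (s \<or> x = 2) xs"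

lemma enclosed_ones_conv_sum:
  "enclosed_ones s cs =
     (\<Sum>i<length cs. if cs ! i = 1 \<and> (s \<or> 2 \<in> set (take i cs)) \<and> 2 \<in> set (drop i cs)
                     then 1 else 0)"
proof (induction cs arbitrary: s)
  case (Cons x xs)
  have "(\<Sum>i<length (x # xs). if (x # xs) ! i = 1 \<and> (s \<or> 2 \<in> set (take i (x # xs))) \<and>
            2 \<in> set (drop i (x # xs)) then 1 else 0)
     = (if x = 1 \<and> s \<and> 2 \<in> set xs then 1 else 0) +
       (\<Sum>i<length xs. if xs ! i = 1 \<and> ((s \<or> x = 2) \<or> 2 \<in> set (take i xs)) \<and>
            2 \<in> set (drop i xs) then 1 else (0 :: nat))"
    by (simp add: sum.lessThan_Suc_shift del: sum.lessThan_Suc) auto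
  then show ?case using Cons.IH[of "s \<or> x = 2"] by simp
qed simp

lemma nth_le_setcompr_eq_set_take:
  "i < length xs \<Longrightarrow> {xs ! j | j. j \<le> i} = set (take (Suc i) xs)"
  by (auto simp: set_conv_nth) (metis less_Suc_eq_le nth_take)

lemma nth_ge_setcompr_eq_set_drop: "{xs ! j | j. i \<le> j \<and> j < length xs} = set (drop i xs)"
proof (intro equalityI subsetI)
  fix y assume "y \<in> {xs ! j | j. i \<le> j \<and> j < length xs}"
  then obtain j where "i \<le> j" "j < length xs" "y = xs ! j" by blast
  then show "y \<in> set (drop i xs)" using nth_mem[of "j - i" "drop i xs"] by simp
next
  fix y assume "y \<in> set (drop i xs)"
  then obtain k where "k < length xs - i" "y = xs ! (i + k)" by (auto simp: in_set_conv_nth)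
  then show "y \<in> {xs ! j | j. i \<le> j \<and> j < length xs}" by force
qed

lemma Max_subset_one_two:
  assumes "finite A" "A \<noteq> {}" "A \<subseteq> {1, 2 :: nat}"
  shows "Max A = (if 2 \<in> A then 2 else 1)"
proof (cases "2 \<in> A")
  case True
  then show ?thesis using assms by (intro trans[OF Max_eqI[of A 2]]) auto
next
  case False
  then have "A = {1}" using assms by auto
  then show ?thesis by simp
qed

lemma water_eq_enclosed_ones:
  assumes "set cs \<subseteq> {1, 2}"
  shows "water cs = enclosed_ones False cs"
  unfolding water_def enclosed_ones_conv_sum
proof (rule sum.cong[OF refl])
  fix i assume "i \<in> {..<length cs}"
  then have i: "i < length cs" by simp
  have left: "{cs ! j | j. j \<le> i} = set (take (Suc i) cs)"
    using i by (rule nth_le_setcompr_eq_set_take)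
  have right: "{cs ! j | j. i \<le> j \<and> j < length cs} = set (drop i cs)"
    by (rule nth_ge_setcompr_eq_set_drop)
  have sub: "set (take (Suc i) cs) \<subseteq> {1, 2}" "set (drop i cs) \<subseteq> {1, 2}"
    using assms set_take_subset set_drop_subset by fastforce+
  have ne: "set (take (Suc i) cs) \<noteq> {}" "set (drop i cs) \<noteq> {}"
    using i by (auto simp: take_eq_Nil)
  have "cs ! i \<in> {1, 2}"
    using i assms nth_mem by fastforce
  moreover have "take (Suc i) cs = take i cs @ [cs ! i]" "drop i cs = cs ! i # drop (Suc i) cs"
    using i by (simp_all add: take_Suc_conv_app_nth Cons_nth_drop_Suc)
  ultimately show "min (Max {cs ! j | j. j \<le> i}) (Max {cs ! j | j. i \<le> j \<and> j < length cs}) - cs ! i =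
      (if cs ! i = 1 \<and> (False \<or> 2 \<in> set (take i cs)) \<and> 2 \<in> set (drop i cs) then 1 else 0)"
    unfolding left right Max_subset_one_two[OF finite_set ne(1) sub(1)]
      Max_subset_one_two[OF finite_set ne(2) sub(2)]
    by auto
qed

lemma mem_W_iff:
  "cs \<in> W n k \<longleftrightarrow> set cs \<subseteq> {1, 2} \<and> sum_list cs = n \<and> enclosed_ones False cs = k"
  by (auto simp: W_def C12_def water_eq_enclosed_ones)

lemma enclosed_ones_replicate_append [simp]:
  "x \<noteq> 2 \<Longrightarrow> enclosed_ones False (replicate a x @ xs) = enclosed_ones False xs"
  by (induction a) auto

lemma enclosed_ones_replicate_two_append [simp]:
  "enclosed_ones s (replicate b 2 @ xs) = enclosed_ones (s \<or> b > 0) xs"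
  by (induction b arbitrary: s) auto

lemma enclosed_ones_replicate [simp]: "enclosed_ones s (replicate c x) = 0"
  by (induction c arbitrary: s) auto

lemma enclosed_ones_seen_eq_0:
  "set cs \<subseteq> {1, 2} \<Longrightarrow> enclosed_ones True cs = 0 \<Longrightarrow> \<exists>b c. cs = replicate b 2 @ replicate c 1"
proof (induction cs)
  case (Cons x xs)
  then obtain b c where bc: "xs = replicate b 2 @ replicate c 1"
    by (auto split: if_splits)
  show ?case
  proof (cases "x = 2")
    case True
    then show ?thesis using bc by (metis append_Cons replicate_Suc)
  next
    case False
    with Cons.prems have "x = 1" "2 \<notin> set xs" by (auto split: if_splits)
    then show ?thesis using bc by (intro exI[of _ 0] exI[of _ "Suc c"]) (cases b, auto)
  qed
qed simp

lemma enclosed_ones_eq_0: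
  "set cs \<subseteq> {1, 2} \<Longrightarrow> enclosed_ones False cs = 0 \<Longrightarrow>
     \<exists>a b c. cs = replicate a 1 @ replicate b 2 @ replicate c 1"
proof (induction cs)
  case (Cons x xs)
  show ?case
  proof (cases "x = 2")
    case True
    then obtain b c where "xs = replicate b 2 @ replicate c 1"
      using Cons.prems enclosed_ones_seen_eq_0[of xs] by auto
    then show ?thesis using True by (intro exI[of _ 0] exI[of _ "Suc b"] exI[of _ c]) simp
  next
    case False
    with Cons obtain a b c where "x = 1" "xs = replicate a 1 @ replicate b 2 @ replicate c 1"
      by auto
    then show ?thesis by (intro exI[of _ "Suc a"] exI[of _ b] exI[of _ c]) simp
  qed
qed simp

lemma enclosed_ones_seen_eq_1:
  "set cs \<subseteq> {1, 2} \<Longrightarrow> enclosed_ones True cs = 1 \<Longrightarrow>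
     \<exists>b d c. cs = replicate b 2 @ 1 # 2 # replicate d 2 @ replicate c 1"
proof (induction cs)
  case (Cons x xs)
  show ?case
  proof (cases "x = 2")
    case True
    with Cons obtain b d c where "xs = replicate b 2 @ 1 # 2 # replicate d 2 @ replicate c 1"
      by auto
    then show ?thesis using True by (intro exI[of _ "Suc b"] exI[of _ d] exI[of _ c]) simp
  next
    case False
    then have x: "x = 1" using Cons.prems by auto
    show ?thesis
    proof (cases "2 \<in> set xs")
      case True
      then obtain b c where bc: "xs = replicate b 2 @ replicate c 1"
        using Cons.prems x enclosed_ones_seen_eq_0[of xs] by auto
      with True obtain d where "b = Suc d" by (cases b) auto
      then show ?thesis using bc x by (intro exI[of _ 0] exI[of _ d] exI[of _ c]) simp
    next
      case False
      then have "enclosed_ones True xs = 1" using Cons.prems x by simp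
      with Cons.IH Cons.prems False show ?thesis by fastforce
    qed
  qed
qed simp

lemma enclosed_ones_eq_1:
  "set cs \<subseteq> {1, 2} \<Longrightarrow> enclosed_ones False cs = 1 \<Longrightarrow>
     \<exists>a b d c. cs = replicate a 1 @ 2 # replicate b 2 @ 1 # 2 # replicate d 2 @ replicate c 1"
proof (induction cs)
  case (Cons x xs)
  show ?case
  proof (cases "x = 2")
    case True
    then obtain b d c where "xs = replicate b 2 @ 1 # 2 # replicate d 2 @ replicate c 1"
      using Cons.prems enclosed_ones_seen_eq_1[of xs] by auto
    then show ?thesis using True by (intro exI[of _ 0] exI[of _ b] exI[of _ d] exI[of _ c]) simp
  next
    case False
    with Cons obtain a b d c where
      "x = 1" "xs = replicate a 1 @ 2 # replicate b 2 @ 1 # 2 # replicate d 2 @ replicate c 1"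
      by auto
    then show ?thesis by (intro exI[of _ "Suc a"] exI[of _ b] exI[of _ d] exI[of _ c]) simp
  qed
qed simp

lemma replicate_append_Cons_eq_iff [simp]:
  "x \<noteq> y \<Longrightarrow> replicate a x @ y # xs = replicate a' x @ y # ys \<longleftrightarrow> a = a' \<and> xs = ys"
proof (induction a arbitrary: a')
  case 0 then show ?case by (cases a') auto
next
  case (Suc a) then show ?case by (cases a') auto
qed

lemma replicate_append_replicate_eq_iff [simp]:
  "x \<noteq> y \<Longrightarrow>
     replicate d x @ replicate c y = replicate d' x @ replicate c' y \<longleftrightarrow> d = d' \<and> c = c'"
proof (induction d arbitrary: d')
  case 0 then show ?case by (cases d'; cases c; cases c') auto
next
  case (Suc d) then show ?case by (cases d'; cases c') auto
qed

definition water0_comp :: "nat \<times> nat \<times> nat \<Rightarrow> nat list" where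
  "water0_comp = (\<lambda>(a, b, c). replicate a 1 @ 2 # replicate b 2 @ replicate c 1)"

definition water0_params :: "nat \<Rightarrow> (nat \<times> nat \<times> nat) set" where
  "water0_params n = {(a, b, c). a + 2 * b + 2 + c = n}"

definition water1_comp :: "nat \<times> nat \<times> nat \<times> nat \<Rightarrow> nat list" where
  "water1_comp =
     (\<lambda>(a, b, d, c). replicate a 1 @ 2 # replicate b 2 @ 1 # 2 # replicate d 2 @ replicate c 1)"

definition water1_params :: "nat \<Rightarrow> (nat \<times> nat \<times> nat \<times> nat) set" where
  "water1_params n = {(a, b, d, c). a + 2 * b + 2 * d + 5 + c = n}"

lemma inj_water0_comp: "inj water0_comp"
  by (auto simp: inj_def water0_comp_def)

lemma inj_water1_comp: "inj water1_comp"
  by (auto simp: inj_def water1_comp_def)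

lemma finite_water0_params: "finite (water0_params n)"
  by (rule finite_subset[of _ "{..n} \<times> {..n} \<times> {..n}"]) (auto simp: water0_params_def)

lemma finite_water1_params: "finite (water1_params n)"
  by (rule finite_subset[of _ "{..n} \<times> {..n} \<times> {..n} \<times> {..n}"]) (auto simp: water1_params_def)

lemma W_0_eq: "W n 0 = insert (replicate n 1) (water0_comp ` water0_params n)"
proof (intro equalityI subsetI)
  fix cs assume cs: "cs \<in> W n 0"
  then obtain a b c where shape: "cs = replicate a 1 @ replicate b 2 @ replicate c 1"
    using enclosed_ones_eq_0 mem_W_iff by blast
  show "cs \<in> insert (replicate n 1) (water0_comp ` water0_params n)"
  proof (cases b)
    case 0
    then have "cs = replicate (a + c) 1" using shape by (simp add: replicate_add)
    moreover have "a + c = n" using cs \<open>cs = replicate (a + c) 1\<close>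
      by (simp add: mem_W_iff sum_list_replicate)
    ultimately show ?thesis by simp
  next
    case (Suc e)
    then have "(a, e, c) \<in> water0_params n" "cs = water0_comp (a, e, c)"
      using cs shape by (simp_all add: mem_W_iff water0_params_def water0_comp_def sum_list_replicate)
    then show ?thesis by blast
  qed
next
  fix cs assume "cs \<in> insert (replicate n 1) (water0_comp ` water0_params n)"
  then show "cs \<in> W n 0"
    by (auto simp: mem_W_iff water0_params_def water0_comp_def sum_list_replicate)
qed

lemma W_1_eq: "W n 1 = water1_comp ` water1_params n"
proof (intro equalityI subsetI)
  fix cs assume cs: "cs \<in> W n 1"
  then obtain a b d c
    where shape: "cs = replicate a 1 @ 2 # replicate b 2 @ 1 # 2 # replicate d 2 @ replicate c 1"
    using enclosed_ones_eq_1 mem_W_iff by blast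
  then have "(a, b, d, c) \<in> water1_params n" "cs = water1_comp (a, b, d, c)"
    using cs by (simp_all add: mem_W_iff water1_params_def water1_comp_def sum_list_replicate)
  then show "cs \<in> water1_comp ` water1_params n" by blast
next
  fix cs assume "cs \<in> water1_comp ` water1_params n"
  then show "cs \<in> W n 1"
    by (auto simp: mem_W_iff water1_params_def water1_comp_def sum_list_replicate)
qed

lemma w_0_eq_card: "w n 0 = card (water0_params n) + 1"
proof -
  have "2 \<in> set (water0_comp p)" for p
    by (cases p) (simp add: water0_comp_def)
  then have "replicate n 1 \<notin> water0_comp ` water0_params n"
    by (metis imageE in_set_replicate numeral_eq_one_iff semiring_norm(85))
  then show ?thesis
    unfolding w_def W_0_eq
    by (simp add: finite_water0_params card_image inj_on_subset[OF inj_water0_comp])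
qed

lemma w_1_eq_card: "w n 1 = card (water1_params n)"
  unfolding w_def W_1_eq by (simp add: card_image inj_on_subset[OF inj_water1_comp])

lemma card_water1_params_rec:
  assumes "n \<ge> 5"
  shows "card (water1_params n) = card (water1_params (n - 2)) + card (water0_params (n - 3))"
proof -
  define longer where "longer = (\<lambda>(a :: nat, b :: nat, d :: nat, c :: nat). (a, Suc b, d, c))"
  define shortest where "shortest = (\<lambda>(a :: nat, d :: nat, c :: nat). (a, 0 :: nat, d, c))"
  have split: "water1_params n = longer ` water1_params (n - 2) \<union> shortest ` water0_params (n - 3)"
  proof (intro equalityI subsetI)
    fix p assume p: "p \<in> water1_params n"
    obtain a b d c where pe: "p = (a, b, d, c)" by (cases p) auto
    show "p \<in> longer ` water1_params (n - 2) \<union> shortest ` water0_params (n - 3)"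
    proof (cases b)
      case 0
      then have "(a, d, c) \<in> water0_params (n - 3)" "p = shortest (a, d, c)"
        using p pe by (auto simp: water1_params_def water0_params_def shortest_def)
      then show ?thesis by blast
    next
      case (Suc e)
      then have "(a, e, d, c) \<in> water1_params (n - 2)" "p = longer (a, e, d, c)"
        using p pe by (auto simp: water1_params_def longer_def)
      then show ?thesis by blast
    qed
  next
    fix p assume "p \<in> longer ` water1_params (n - 2) \<union> shortest ` water0_params (n - 3)"
    then show "p \<in> water1_params n"
      using assms by (auto simp: water1_params_def water0_params_def longer_def shortest_def)
  qed
  have "longer ` water1_params (n - 2) \<inter> shortest ` water0_params (n - 3) = {}"
    by (auto simp: longer_def shortest_def)
  moreover have "inj longer" "inj shortest"
    by (auto simp: inj_def longer_def shortest_def)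
  ultimately show ?thesis
    unfolding split
    by (simp add: card_Un_disjoint finite_water0_params finite_water1_params card_image inj_on_subset)
qed

theorem theorem2p3:
  fixes n :: nat
  assumes "n \<ge> 5"
  shows "int (w n 1) = int (w (n - 2) 1) + int (w (n - 3) 0) - 1"
  using card_water1_params_rec[OF assms] unfolding w_1_eq_card w_0_eq_card by simp

end
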